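(* Let $G$ be a finite group and let $X = \{[a,b]^k \mid a,b \in G,\ (|a|,|b|)=1,\ k \in \mathbb{Z}\}$. Assume that for all $x,y \in X$ with $(|x|,|y|)=1$ we have $|xy|=|x|\,|y|$. Let $x \in X$ and let $N$ be a subgroup of $G$ normalized by $x$. If $(|x|,|N|)=1$, then $[x,N]=1$, i.e. $x$ centralizes $N$.
   Context: All groups are finite. $|x|$ denotes the order of an element $x$ and $|N|$ the order of a subgroup $N$. $[a,b]=a^{-1}b^{-1}ab$, and $[x,N]$ is the subgroup generated by all $[x,y]$, $y\in N$. *)

theory Defs
  imports "HOL-Algebra.Algebra"
begin

definition commutator :: "('a, 'b) monoid_scheme \<Rightarrow> 'a \<Rightarrow> 'a \<Rightarrow> 'a" where
  "commutator G a b = inv\<^bsub>G\<^esub> a \<otimes>\<^bsub>G\<^esub> inv\<^bsub>G\<^esub> b \<otimes>\<^bsub>G\<^esub> a \<otimes>\<^bsub>G\<^esub> b"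

definition coprime_comm_powers :: "('a, 'b) monoid_scheme \<Rightarrow> 'a set" where
  "coprime_comm_powers G = {(commutator G a b) [^]\<^bsub>G\<^esub> (k::int) | a b k.
      a \<in> carrier G \<and> b \<in> carrier G \<and> coprime (group.ord G a) (group.ord G b)}"

definition comm_elem_subgroup :: "('a, 'b) monoid_scheme \<Rightarrow> 'a \<Rightarrow> 'a set \<Rightarrow> 'a set" where
  "comm_elem_subgroup G x N = generate G {commutator G x y | y. y \<in> N}"

end

theory Submission
  imports Defs
begin

text \<open>
  Let \<open>y \<in> N\<close>. Since \<open>x\<close> normalizes \<open>N\<close>, the commutator \<open>c = [x,y] = x\<inverse> (y\<inverse> x y)\<close> lies in
  \<open>N\<close>, so its order divides \<open>|N|\<close> and is coprime to \<open>|x|\<close>; it also lies in \<open>X\<close>, because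
  \<open>|y|\<close> divides \<open>|N|\<close>. The hypothesis then gives \<open>|x c| = |x| |c|\<close>. But \<open>x c = y\<inverse> x y\<close>
  is a conjugate of \<open>x\<close> and has order \<open>|x|\<close>, hence \<open>|c| = 1\<close>.
\<close>

lemma (in group) card_subgroup_dvd_card:
  assumes "subgroup I G" "subgroup J G" "I \<subseteq> J"
  shows "card I dvd card J"
proof -
  interpret J: group "G\<lparr>carrier := J\<rparr>"
    using subgroup_imp_group[OF assms(2)] .
  have "card (rcosets\<^bsub>G\<lparr>carrier := J\<rparr>\<^esub> I) * card I = card J"
    using J.lagrange[OF subgroup_incl[OF assms]] by (simp add: order_def)
  then show ?thesis by (metis dvd_triv_right)
qed

lemma (in group) ord_dvd_card_subgroup:
  assumes "subgroup N G" "y \<in> N"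
  shows "ord y dvd card N"
proof -
  have y: "y \<in> carrier G" using subgroup.mem_carrier[OF assms] .
  have "generate G {y} \<subseteq> N"
    using generate_subgroup_incl[of "{y}" N] assms by simp
  then have "card (generate G {y}) dvd card N"
    using card_subgroup_dvd_card[OF generate_is_subgroup assms(1)] y by simp
  then show ?thesis using generate_pow_card[OF y] by simp
qed

lemma (in group) conj_nat_pow:
  assumes "x \<in> carrier G" "y \<in> carrier G"
  shows "(inv y \<otimes> x \<otimes> y) [^] (n::nat) = inv y \<otimes> x [^] n \<otimes> y"
proof (induction n)
  case 0
  show ?case using assms by simp
next
  case (Suc n)
  have "(inv y \<otimes> x \<otimes> y) [^] Suc n = (inv y \<otimes> x [^] n \<otimes> y) \<otimes> (inv y \<otimes> x \<otimes> y)"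
    using Suc by simp
  also have "\<dots> = inv y \<otimes> x [^] n \<otimes> (y \<otimes> inv y) \<otimes> x \<otimes> y"
    using assms by (simp only: m_assoc m_closed inv_closed nat_pow_closed)
  also have "\<dots> = inv y \<otimes> x [^] Suc n \<otimes> y"
    using assms by (simp add: m_assoc)
  finally show ?case .
qed

lemma (in group) conj_eq_one_iff:
  assumes "z \<in> carrier G" "y \<in> carrier G"
  shows "inv y \<otimes> z \<otimes> y = \<one> \<longleftrightarrow> z = \<one>"
  using assms conjugation_is_inj[of "inv y" z \<one>] by auto

lemma (in group) ord_conj:
  assumes "x \<in> carrier G" "y \<in> carrier G"
  shows "ord (inv y \<otimes> x \<otimes> y) = ord x"
proof -
  have "(inv y \<otimes> x \<otimes> y) [^] n = \<one> \<longleftrightarrow> x [^] n = \<one>" for n :: nat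
    using assms by (simp add: conj_nat_pow conj_eq_one_iff)
  then show ?thesis
    using assms by (simp add: ord_unique pow_eq_id)
qed

lemma (in group) mult_commutator:
  assumes "x \<in> carrier G" "y \<in> carrier G"
  shows "x \<otimes> commutator G x y = inv y \<otimes> x \<otimes> y"
  using assms by (simp add: commutator_def m_assoc[symmetric])

lemma (in group) commutator_mem_normalized_subgroup:
  assumes "subgroup N G" "x \<in> carrier G" "{x \<otimes> n \<otimes> inv x | n. n \<in> N} = N" "y \<in> N"
  shows "commutator G x y \<in> N"
proof -
  have "inv y \<in> N" using subgroup.m_inv_closed[OF assms(1,4)] .
  then obtain n where n: "n \<in> N" "inv y = x \<otimes> n \<otimes> inv x"
    using assms(3) by blast
  have "inv x \<otimes> inv y \<otimes> x = n"
    using n assms(2) subgroup.mem_carrier[OF assms(1) n(1)]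
    by (simp add: m_assoc inv_solve_left')
  then show ?thesis
    using subgroup.m_closed[OF assms(1) n(1) assms(4)] by (simp add: commutator_def)
qed

lemma (in group) commutator_mem_coprime_comm_powers:
  assumes "a \<in> carrier G" "b \<in> carrier G" "coprime (ord a) (ord b)"
  shows "commutator G a b \<in> coprime_comm_powers G"
proof -
  have "commutator G a b = commutator G a b [^] (1::int)"
    using assms(1,2) by (simp add: commutator_def)
  then show ?thesis
    unfolding coprime_comm_powers_def using assms by blast
qed

lemma (in group) generate_eq_one_if_subset_one:
  assumes "S \<subseteq> {\<one>}"
  shows "generate G S = {\<one>}"
  using subset_singletonD[OF assms] generate_empty generate_one by blast

theorem mainTheorem2:
  fixes G (structure)
  assumes "group G" and "finite (carrier G)"
    and hyp: "\<forall>x\<in>coprime_comm_powers G. \<forall>y\<in>coprime_comm_powers G.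
               coprime (group.ord G x) (group.ord G y) \<longrightarrow>
               group.ord G (x \<otimes> y) = group.ord G x * group.ord G y"
    and "x \<in> coprime_comm_powers G"
    and "subgroup N G"
    and "{x \<otimes> n \<otimes> inv x | n. n \<in> N} = N"
    and "coprime (group.ord G x) (card N)"
  shows "comm_elem_subgroup G x N = {\<one>}"
proof -
  interpret group G by fact
  have x: "x \<in> carrier G"
    using assms(4) by (auto simp: coprime_comm_powers_def commutator_def)
  have coprime_ord_N: "coprime (ord x) (ord z)" if "z \<in> N" for z
    using coprime_divisors[OF dvd_refl ord_dvd_card_subgroup[OF assms(5) that] assms(7)] .
  have "commutator G x y = \<one>" if y: "y \<in> N" for y
  proof -
    let ?c = "commutator G x y"
    have yG: "y \<in> carrier G" using subgroup.mem_carrier[OF assms(5) y] .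
    have cN: "?c \<in> N" using commutator_mem_normalized_subgroup[OF assms(5) x assms(6) y] .
    have cX: "?c \<in> coprime_comm_powers G"
      using commutator_mem_coprime_comm_powers[OF x yG coprime_ord_N[OF y]] .
    have "ord x * ord ?c = ord x"
      using hyp assms(4) cX coprime_ord_N[OF cN] mult_commutator[OF x yG] ord_conj[OF x yG]
      by metis
    moreover have "ord x \<ge> 1" using ord_ge_1[OF assms(2) x] .
    ultimately have "ord ?c = 1" by simp
    then show ?thesis using ord_eq_1 subgroup.mem_carrier[OF assms(5) cN] by blast
  qed
  then show ?thesis
    unfolding comm_elem_subgroup_def by (intro generate_eq_one_if_subset_one) blast
qed

end
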